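(* Let $\mathbb{H}$ be a real Hilbert space and $0\neq T\in\mathbb{B}(\mathbb{H})$. Then the following are equivalent: (i) $T$ is a smooth point of $\mathbb{B}(\mathbb{H})$. (ii) $M_T=\{\pm x_0\}$ for some $x_0\in S_{\mathbb{H}}$, and $\|T|_{H_0}\|<\|T\|$, where $H_0=\{x_0\}^{\perp}$ is the orthogonal complement of $x_0$. (iii) For every $A\in\mathbb{B}(\mathbb{H})$: $T\perp_B A$ if and only if for every norming sequence $\{x_n\}$ for $T$, every subsequential limit of $\{\langle Ax_n,Tx_n\rangle\}$ equals $0$.
   Context: $\mathbb{B}(\mathbb{H})$ carries the operator norm; $S_{\mathbb{H}}$ is the unit sphere; $M_T=\{x\in S_{\mathbb{H}}:\|Tx\|=\|T\|\}$. A nonzero element $x$ of a normed space $\mathbb{Z}$ is smooth if there is a unique $f\in\mathbb{Z}^*$ with $\|f\|=1$, $f(x)=\|x\|$. $S\perp_B A$ means $\|S+\lambda A\|\ge\|S\|$ for all real $\lambda$. A norming sequence for $T$ is $\{x_n\}\subseteq S_{\mathbb{H}}$ with $\|Tx_n\|\to\|T\|$. *)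

theory Defs
  imports "HOL-Analysis.Analysis"
begin

definition smooth_point :: "'z::real_normed_vector \<Rightarrow> bool" where
  "smooth_point x \<longleftrightarrow> x \<noteq> 0 \<and>
     (\<exists>!f :: 'z \<Rightarrow>\<^sub>L real. norm f = 1 \<and> blinfun_apply f x = norm x)"

definition norm_attain :: "('a::real_normed_vector \<Rightarrow>\<^sub>L 'b::real_normed_vector) \<Rightarrow> 'a set" where
  "norm_attain T = {x. norm x = 1 \<and> norm (blinfun_apply T x) = norm T}"

definition birkhoff_orth :: "'z::real_normed_vector \<Rightarrow> 'z \<Rightarrow> bool" where
  "birkhoff_orth S A \<longleftrightarrow> (\<forall>t::real. norm (S + t *\<^sub>R A) \<ge> norm S)"

definition restr_norm :: "('a::real_normed_vector \<Rightarrow>\<^sub>L 'b::real_normed_vector) \<Rightarrow> 'a set \<Rightarrow> real" where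
  "restr_norm T V = Sup {norm (blinfun_apply T x) | x. x \<in> V \<and> norm x \<le> 1}"

definition norming_seq :: "('a::real_normed_vector \<Rightarrow>\<^sub>L 'b::real_normed_vector) \<Rightarrow> (nat \<Rightarrow> 'a) \<Rightarrow> bool" where
  "norming_seq T xs \<longleftrightarrow> (\<forall>n. norm (xs n) = 1) \<and> (\<lambda>n. norm (blinfun_apply T (xs n))) \<longlonglongrightarrow> norm T"

definition subseq_limit :: "(nat \<Rightarrow> real) \<Rightarrow> real \<Rightarrow> bool" where
  "subseq_limit s l \<longleftrightarrow> (\<exists>r. strict_mono r \<and> (s \<circ> r) \<longlonglongrightarrow> l)"

end

theory Submission
  imports Defs
begin

(* If (ii) holds, write a unit vector as x = a x0 + y with y orthogonal to x0. Then T x0 is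
   orthogonal to T y and ||T y|| <= ||T|H0|| ||y||, so ||T x||^2 <= ||T||^2 - g ||y||^2 with g > 0,
   and hence ||T + t A||^2 <= ||T||^2 + 2 t <A x0, T x0> + C t^2. Consequently every support
   functional of T is B |-> <B x0, T x0> / ||T||, so T is smooth; T is Birkhoff-James orthogonal
   to A iff <A x0, T x0> = 0; and <A x_n, T x_n> tends to <A x0, T x0> along every norming
   sequence, which gives (iii).
   If (ii) fails, there are an operator A and two norming sequences along which <A x_n, T x_n>
   tends to 0 and to a nonzero limit: A is T composed with a rank-one map when M_T contains two
   non-antipodal vectors or when ||T|H0|| = ||T||, and T composed with the projection onto the odd
   members of an orthonormal sequence of almost norming vectors when M_T is empty. Limits along an
   ultrafilter turn the two sequences into two distinct support functionals, so T is not smooth;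
   and A is orthogonal to T although some norming sequence detects a nonzero limit, so (iii) fails.
*)

section \<open>Limits along ultrafilters\<close>

definition ultrafilter :: "'a filter \<Rightarrow> bool" where
  "ultrafilter U \<longleftrightarrow> U \<noteq> bot \<and> (\<forall>P. eventually P U \<or> eventually (\<lambda>x. \<not> P x) U)"

lemma ex_ultrafilter_le:
  fixes F :: "'a filter"
  assumes "F \<noteq> bot"
  shows "\<exists>U\<le>F. ultrafilter U"
proof -
  let ?A = "{G. G \<noteq> bot \<and> G \<le> F}"
  have po: "partial_order_on ?A (relation_of (\<ge>) ?A)"
    by (auto simp: partial_order_on_def preorder_on_def refl_on_def trans_def antisym_def
        relation_of_def)
  have "\<exists>G\<in>?A. \<forall>H\<in>C. G \<le> H" if C: "C \<in> Chains (relation_of (\<ge>) ?A)" for C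
  proof (cases "C = {}")
    case True
    then show ?thesis using assms by blast
  next
    case False
    have C_sub: "C \<subseteq> ?A" and C_lin: "\<And>G H. G \<in> C \<Longrightarrow> H \<in> C \<Longrightarrow> G \<le> H \<or> H \<le> G"
      using C by (auto simp: Chains_def relation_of_def)
    have "eventually P (Inf C) \<longleftrightarrow> (\<exists>G\<in>C. eventually P G)" for P
      by (rule eventually_Inf_base[OF False]) (metis C_lin inf_absorb1 inf_absorb2)
    then have "Inf C \<noteq> bot"
      using C_sub by (auto simp: trivial_limit_def)
    moreover obtain G where "G \<in> C" using False by blast
    then have "Inf C \<le> F" using C_sub by (auto intro: Inf_lower2)
    ultimately show ?thesis by (auto intro: Inf_lower)
  qed
  then obtain U where U: "U \<in> ?A" and max: "\<And>G. G \<in> ?A \<Longrightarrow> G \<le> U \<Longrightarrow> G = U"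
    using predicate_Zorn[OF po] by blast
  have "eventually P U" if "\<not> eventually (\<lambda>x. \<not> P x) U" for P
  proof -
    let ?G = "inf U (principal {x. P x})"
    have "?G \<noteq> bot"
      using that by (simp add: trivial_limit_def eventually_inf_principal)
    then have "?G = U" using U by (intro max) (auto intro: le_infI1)
    moreover have "eventually P ?G" by (simp add: eventually_inf_principal)
    ultimately show ?thesis by simp
  qed
  then show ?thesis using U unfolding ultrafilter_def by blast
qed

lemma ex_tendsto_ultrafilter_compact:
  fixes s :: "'a \<Rightarrow> 'b::t2_space"
  assumes U: "ultrafilter U" and K: "compact K" and sK: "eventually (\<lambda>x. s x \<in> K) U"
  shows "\<exists>l. (s \<longlongrightarrow> l) U"
proof -
  have "filtermap s U \<noteq> bot" and "eventually (\<lambda>y. y \<in> K) (filtermap s U)"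
    using U sK by (auto simp: ultrafilter_def filtermap_bot_iff eventually_filtermap)
  then obtain l where "inf (nhds l) (filtermap s U) \<noteq> bot"
    using K unfolding compact_filter by blast
  have "(s \<longlongrightarrow> l) U"
  proof (rule topological_tendstoI)
    fix S assume "open S" "l \<in> S"
    show "eventually (\<lambda>x. s x \<in> S) U"
    proof (rule ccontr)
      assume "\<not> eventually (\<lambda>x. s x \<in> S) U"
      then have "eventually (\<lambda>y. y \<notin> S) (filtermap s U)"
        using U by (auto simp: ultrafilter_def eventually_filtermap)
      moreover have "eventually (\<lambda>y. y \<in> S) (nhds l)"
        using \<open>open S\<close> \<open>l \<in> S\<close> by (rule eventually_nhds_in_open)
      ultimately have "eventually (\<lambda>y. False) (inf (nhds l) (filtermap s U))"
        unfolding eventually_inf by (intro exI[of _ "\<lambda>y. y \<in> S"] exI[of _ "\<lambda>y. y \<notin> S"]) auto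
      then have "inf (nhds l) (filtermap s U) = bot"
        by (simp add: trivial_limit_def)
      then show False using \<open>inf (nhds l) (filtermap s U) \<noteq> bot\<close> by contradiction
    qed
  qed
  then show ?thesis ..
qed

lemma norm_apply_add_scaleR_sq:
  fixes T A :: "'a::real_normed_vector \<Rightarrow>\<^sub>L 'b::real_inner"
  shows "(norm ((T + t *\<^sub>R A) x))\<^sup>2 = (norm (T x))\<^sup>2 + 2 * t * (A x \<bullet> T x) + t\<^sup>2 * (norm (A x))\<^sup>2"
  unfolding blinfun.add_left blinfun.scaleR_left power2_norm_eq_inner
  by (simp add: inner_add_left inner_add_right inner_commute power2_eq_square algebra_simps)

lemma inner_apply_le:
  fixes A T :: "'a::real_normed_vector \<Rightarrow>\<^sub>L 'b::real_inner"
  shows "\<bar>A u \<bullet> T v\<bar> \<le> norm A * norm T * (norm u * norm v)"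
proof -
  have "\<bar>A u \<bullet> T v\<bar> \<le> norm (A u) * norm (T v)" by (rule Cauchy_Schwarz_ineq2)
  also have "\<dots> \<le> (norm A * norm u) * (norm T * norm v)"
    by (intro mult_mono norm_blinfun) auto
  finally show ?thesis by (simp add: algebra_simps)
qed

lemma linear_le_quadratic_imp_zero:
  fixes b K \<delta> :: real
  assumes "0 < \<delta>" and le: "\<And>t. \<bar>t\<bar> < \<delta> \<Longrightarrow> t * b \<le> K * t\<^sup>2"
  shows "b = 0"
proof (rule ccontr)
  assume "b \<noteq> 0"
  define \<epsilon> where "\<epsilon> = min (\<delta> / (2 * \<bar>b\<bar>)) (1 / (2 * (\<bar>K\<bar> + 1)))"
  have \<epsilon>: "0 < \<epsilon>" "\<epsilon> * \<bar>b\<bar> < \<delta>" "\<bar>K\<bar> * \<epsilon> < 1"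
    using \<open>0 < \<delta>\<close> \<open>b \<noteq> 0\<close> by (auto simp: \<epsilon>_def min_def field_simps)
  have "(\<epsilon> * b) * b \<le> K * (\<epsilon> * b)\<^sup>2"
    using \<epsilon> by (intro le) (simp add: abs_mult)
  then have "b\<^sup>2 * \<epsilon> \<le> b\<^sup>2 * (K * \<epsilon>) * \<epsilon>"
    by (simp add: power2_eq_square algebra_simps)
  then have "1 \<le> K * \<epsilon>"
    using \<epsilon>(1) \<open>b \<noteq> 0\<close> by (simp add: mult.assoc)
  moreover have "K * \<epsilon> \<le> \<bar>K\<bar> * \<epsilon>"
    using \<epsilon>(1) by (intro mult_right_mono) auto
  ultimately show False using \<epsilon>(3) by linarith
qed

lemma norm_blinfun_le_of_unit:
  fixes B :: "'a::real_normed_vector \<Rightarrow>\<^sub>L 'b::real_normed_vector"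
  assumes "0 \<le> M" and "\<And>u. norm u = 1 \<Longrightarrow> norm (B u) \<le> M"
  shows "norm B \<le> M"
proof (rule norm_blinfun_bound[OF \<open>0 \<le> M\<close>])
  show "norm (B x) \<le> M * norm x" for x
  proof (cases "x = 0")
    case False
    have "norm (B (x /\<^sub>R norm x)) \<le> M" using False by (intro assms(2)) simp
    then show ?thesis
      using False by (simp add: blinfun.scaleR_right field_simps)
  qed simp
qed

lemma mult_le_square_div:
  fixes d u v :: real
  assumes "0 < d"
  shows "2 * u * v \<le> d * v\<^sup>2 + u\<^sup>2 / d"
proof -
  have "0 \<le> (d * v - u)\<^sup>2 / d" using assms by simp
  also have "\<dots> = d * v\<^sup>2 - 2 * u * v + u\<^sup>2 / d"
    using assms by (simp add: power2_eq_square field_simps)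
  finally show ?thesis by simp
qed

lemma subseq_limit_of_tendsto: "s \<longlonglongrightarrow> l \<Longrightarrow> subseq_limit s l"
  unfolding subseq_limit_def by (intro exI[of _ id]) (simp add: strict_mono_id)

lemma subseq_limit_unique:
  assumes "s \<longlonglongrightarrow> l" and "subseq_limit s l'"
  shows "l' = l"
proof -
  obtain r where r: "strict_mono r" and lim': "(s \<circ> r) \<longlonglongrightarrow> l'"
    using assms(2) by (auto simp: subseq_limit_def)
  have "(s \<circ> r) \<longlonglongrightarrow> l" by (rule LIMSEQ_subseq_LIMSEQ[OF assms(1) r])
  with lim' show ?thesis by (rule LIMSEQ_unique)
qed

section \<open>Restricted norms and norming sequences\<close>

lemma bdd_above_restr_norm:
  fixes T :: "'a::real_normed_vector \<Rightarrow>\<^sub>L 'b::real_normed_vector"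
  shows "bdd_above {norm (T x) | x. x \<in> V \<and> norm x \<le> 1}"
proof (rule bdd_aboveI)
  fix r assume "r \<in> {norm (T x) | x. x \<in> V \<and> norm x \<le> 1}"
  then obtain x where "r = norm (T x)" "norm x \<le> 1" by blast
  with norm_blinfun[of T x] show "r \<le> norm T"
    by (smt (verit) mult_left_le norm_ge_zero)
qed

lemma restr_norm_nonneg:
  assumes "subspace V"
  shows "0 \<le> restr_norm T V"
proof -
  have "0 \<in> {norm (T x) | x. x \<in> V \<and> norm x \<le> 1}"
    using subspace_0[OF assms] by (auto intro!: exI[of _ 0])
  then show ?thesis
    unfolding restr_norm_def by (rule cSup_upper2[OF _ order_refl bdd_above_restr_norm])
qed

lemma norm_apply_le_restr_norm:
  fixes T :: "'a::real_normed_vector \<Rightarrow>\<^sub>L 'b::real_normed_vector"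
  assumes "subspace V" and "y \<in> V"
  shows "norm (T y) \<le> restr_norm T V * norm y"
proof (cases "y = 0")
  case False
  have "norm (T (y /\<^sub>R norm y)) \<le> restr_norm T V"
    unfolding restr_norm_def
    by (rule cSup_upper[OF _ bdd_above_restr_norm]) (use subspace_scale[OF assms] False in auto)
  then show ?thesis
    using False by (simp add: blinfun.scaleR_right field_simps)
qed simp

lemma restr_norm_approx:
  fixes T :: "'a::real_normed_vector \<Rightarrow>\<^sub>L 'b::real_normed_vector"
  assumes V: "subspace V" and "0 \<le> c" and "c < restr_norm T V"
  obtains u where "u \<in> V" "norm u = 1" "c < norm (T u)"
proof -
  let ?S = "{norm (T x) | x. x \<in> V \<and> norm x \<le> 1}"
  have "?S \<noteq> {}"
    using subspace_0[OF V] by (auto intro!: exI[of _ 0])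
  with assms(3) obtain x where x: "x \<in> V" "norm x \<le> 1" "c < norm (T x)"
    using less_cSup_iff[OF _ bdd_above_restr_norm] unfolding restr_norm_def by blast
  then have "x \<noteq> 0" using \<open>0 \<le> c\<close> by auto
  have "norm (T x) \<le> norm (T (x /\<^sub>R norm x))"
    using x(2) \<open>x \<noteq> 0\<close> by (simp add: blinfun.scaleR_right field_simps mult_left_le_one_le)
  with x \<open>x \<noteq> 0\<close> subspace_scale[OF V] show ?thesis
    by (intro that[of "x /\<^sub>R norm x"]) auto
qed

lemma norming_seq_in_subspace:
  fixes T :: "'a::real_normed_vector \<Rightarrow>\<^sub>L 'b::real_normed_vector"
  assumes "T \<noteq> 0" and V: "subspace V" and le: "norm T \<le> restr_norm T V"
  obtains xs where "norming_seq T xs" "\<And>n. xs n \<in> V"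
proof -
  define \<epsilon> where "\<epsilon> n = norm T / real (Suc (Suc n))" for n
  have "0 < norm T" using assms by simp
  then have "0 < \<epsilon> n" "\<epsilon> n < norm T" for n
    by (auto simp: \<epsilon>_def field_simps add_pos_nonneg)
  then have "\<exists>u. u \<in> V \<and> norm u = 1 \<and> norm T - \<epsilon> n < norm (T u)" for n
  proof -
    have "0 \<le> norm T - \<epsilon> n" "norm T - \<epsilon> n < restr_norm T V"
      using \<open>0 < \<epsilon> n\<close> \<open>\<epsilon> n < norm T\<close> le by linarith+
    from restr_norm_approx[OF V this] show ?thesis by blast
  qed
  then obtain xs where xs: "\<And>n. xs n \<in> V" "\<And>n. norm (xs n) = 1"
    "\<And>n. norm T - \<epsilon> n < norm (T (xs n))"
    by metis
  have "\<epsilon> \<longlonglongrightarrow> 0"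
    unfolding \<epsilon>_def by (intro LIMSEQ_Suc lim_const_over_n)
  from tendsto_diff[OF tendsto_const[of "norm T"] this]
  have lim: "(\<lambda>n. norm T - \<epsilon> n) \<longlonglongrightarrow> norm T" by simp
  have lower: "\<forall>n. norm T - \<epsilon> n \<le> norm (T (xs n))"
    using xs(3) less_imp_le by blast
  have upper: "\<forall>n. norm (T (xs n)) \<le> norm T"
    using norm_blinfun[of T] xs(2) by (metis mult.right_neutral)
  have "(\<lambda>n. norm (T (xs n))) \<longlonglongrightarrow> norm T"
    by (rule real_tendsto_sandwich[OF always_eventually[OF lower] always_eventually[OF upper]
          lim tendsto_const])
  with xs(2) have "norming_seq T xs" by (simp add: norming_seq_def)
  then show ?thesis using xs(1) by (rule that)
qed

lemma norming_seq_exists: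
  fixes T :: "'a::real_normed_vector \<Rightarrow>\<^sub>L 'b::real_normed_vector"
  assumes "T \<noteq> 0"
  obtains xs where "norming_seq T xs"
proof (rule norming_seq_in_subspace[OF assms subspace_UNIV])
  show "norm T \<le> restr_norm T UNIV"
    by (rule norm_blinfun_bound[OF restr_norm_nonneg[OF subspace_UNIV]])
      (rule norm_apply_le_restr_norm[OF subspace_UNIV UNIV_I])
qed

lemma subspace_inner_zero: "subspace {x. x \<bullet> v = 0}"
  by (auto simp: subspace_def inner_add_left)

lemma norming_seq_const:
  assumes "x \<in> norm_attain T"
  shows "norming_seq T (\<lambda>n. x)"
  using assms by (simp add: norm_attain_def norming_seq_def)

lemma norming_seq_subseq:
  assumes "norming_seq T xs" and "strict_mono r"
  shows "norming_seq T (xs \<circ> r)"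
  using assms LIMSEQ_subseq_LIMSEQ[of "\<lambda>n. norm (T (xs n))" "norm T" r]
  by (auto simp: norming_seq_def o_def)

definition defect :: "('a::real_normed_vector \<Rightarrow>\<^sub>L 'b::real_normed_vector) \<Rightarrow> 'a \<Rightarrow> real" where
  "defect T x = (norm T)\<^sup>2 * (norm x)\<^sup>2 - (norm (T x))\<^sup>2"

lemma defect_nonneg: "0 \<le> defect T x"
  using norm_blinfun[of T x] unfolding defect_def
  by (metis diff_ge_0_iff_ge norm_ge_zero power_mono power_mult_distrib)

lemma defect_le: "defect T x \<le> (norm T)\<^sup>2 * (norm x)\<^sup>2"
  by (simp add: defect_def)

lemma defect_scaleR: "defect T (c *\<^sub>R x) = c\<^sup>2 * defect T x"
  by (simp add: defect_def blinfun.scaleR_right power_mult_distrib algebra_simps)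

lemma defect_uminus: "defect T (- x) = defect T x"
  by (simp add: defect_def blinfun.minus_right)

lemma defect_add_le:
  fixes T :: "'a::real_inner \<Rightarrow>\<^sub>L 'b::real_inner"
  shows "defect T (x + y) \<le> 2 * defect T x + 2 * defect T y"
proof -
  have "defect T (x + y) + defect T (x - y) = 2 * defect T x + 2 * defect T y"
    by (simp add: defect_def blinfun.add_right blinfun.diff_right power2_norm_eq_inner
        inner_add_left inner_add_right inner_diff_left inner_diff_right inner_commute algebra_simps)
  then show ?thesis using defect_nonneg[of T "x - y"] by simp
qed

lemma defect_diff_le:
  fixes T :: "'a::real_inner \<Rightarrow>\<^sub>L 'b::real_inner"
  shows "defect T ((x - p) - (y - q))
    \<le> 4 * defect T x + 4 * defect T y + 2 * (norm T)\<^sup>2 * (norm (p - q))\<^sup>2"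
proof -
  have "defect T ((x - p) - (y - q)) \<le> 2 * defect T (x + - y) + 2 * defect T (q - p)"
    using defect_add_le[of T "x + - y" "q - p"] by (simp add: algebra_simps)
  moreover have "defect T (x + - y) \<le> 2 * defect T x + 2 * defect T y"
    using defect_add_le[of T x "- y"] by (simp add: defect_uminus)
  moreover have "defect T (q - p) \<le> (norm T)\<^sup>2 * (norm (p - q))\<^sup>2"
    using defect_le[of T "q - p"] by (simp add: norm_minus_commute)
  ultimately show ?thesis by linarith
qed

lemma norming_seq_iff_defect:
  "norming_seq T xs \<longleftrightarrow> (\<forall>n. norm (xs n) = 1) \<and> (\<lambda>n. defect T (xs n)) \<longlonglongrightarrow> 0"
proof (cases "\<forall>n. norm (xs n) = 1")
  case True
  then have defect: "defect T (xs n) = (norm T)\<^sup>2 - (norm (T (xs n)))\<^sup>2" for n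
    by (simp add: defect_def)
  have "(\<lambda>n. norm (T (xs n))) \<longlonglongrightarrow> norm T \<longleftrightarrow> (\<lambda>n. (norm (T (xs n)))\<^sup>2) \<longlonglongrightarrow> (norm T)\<^sup>2"
  proof
    assume "(\<lambda>n. (norm (T (xs n)))\<^sup>2) \<longlonglongrightarrow> (norm T)\<^sup>2"
    from tendsto_real_sqrt[OF this] show "(\<lambda>n. norm (T (xs n))) \<longlonglongrightarrow> norm T" by simp
  qed (rule tendsto_power)
  also have "\<dots> \<longleftrightarrow> (\<lambda>n. defect T (xs n)) \<longlonglongrightarrow> 0"
    unfolding defect
  proof
    assume "(\<lambda>n. (norm (T (xs n)))\<^sup>2) \<longlonglongrightarrow> (norm T)\<^sup>2"
    from tendsto_diff[OF tendsto_const[of "(norm T)\<^sup>2"] this]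
    show "(\<lambda>n. (norm T)\<^sup>2 - (norm (T (xs n)))\<^sup>2) \<longlonglongrightarrow> 0"
      by simp
  next
    assume "(\<lambda>n. (norm T)\<^sup>2 - (norm (T (xs n)))\<^sup>2) \<longlonglongrightarrow> 0"
    from tendsto_diff[OF tendsto_const[of "(norm T)\<^sup>2"] this]
    show "(\<lambda>n. (norm (T (xs n)))\<^sup>2) \<longlonglongrightarrow> (norm T)\<^sup>2"
      by simp
  qed
  finally show ?thesis using True by (simp add: norming_seq_def)
qed (auto simp: norming_seq_def)

section \<open>Support functionals and Birkhoff--James orthogonality\<close>

lemma ultrafilter_limit_functional:
  fixes s :: "'z::real_normed_vector \<Rightarrow> 'i \<Rightarrow> real"
  assumes U: "ultrafilter U"
    and add: "\<And>B C i. s (B + C) i = s B i + s C i"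
    and scale: "\<And>r B i. s (r *\<^sub>R B) i = r * s B i"
    and bound: "\<And>B i. \<bar>s B i\<bar> \<le> norm B"
  obtains f :: "'z \<Rightarrow>\<^sub>L real" where "\<And>B. (s B \<longlongrightarrow> f B) U" and "norm f \<le> 1"
proof -
  have U_bot: "U \<noteq> bot" using U by (simp add: ultrafilter_def)
  define g where "g B = Lim U (s B)" for B
  have g: "(s B \<longlongrightarrow> g B) U" for B
  proof -
    have "eventually (\<lambda>i. s B i \<in> {- norm B .. norm B}) U"
      using bound abs_le_D1 abs_le_D2 by (intro always_eventually) fastforce
    then obtain c where "(s B \<longlongrightarrow> c) U"
      using ex_tendsto_ultrafilter_compact[OF U compact_Icc] by blast
    then show ?thesis using tendsto_Lim[OF U_bot, of "s B" c] by (simp add: g_def)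
  qed
  have g_eqI: "g B = c" if "(s B \<longlongrightarrow> c) U" for B c
    using tendsto_unique[OF U_bot g that] .
  have g_bound: "\<bar>g B\<bar> \<le> norm B" for B
    using tendsto_upperbound[OF tendsto_rabs[OF g] _ U_bot] bound by simp
  have "bounded_linear g"
  proof (rule bounded_linear_intro[where K=1])
    show "g (B + C) = g B + g C" for B C
    proof (rule g_eqI)
      have "s (B + C) = (\<lambda>i. s B i + s C i)" by (rule ext) (rule add)
      with tendsto_add[OF g[of B] g[of C]] show "(s (B + C) \<longlongrightarrow> g B + g C) U" by simp
    qed
    show "g (r *\<^sub>R B) = r *\<^sub>R g B" for r B
    proof (rule g_eqI)
      have "s (r *\<^sub>R B) = (\<lambda>i. r * s B i)" by (rule ext) (rule scale)
      with tendsto_mult[OF tendsto_const g[of B], of r] show "(s (r *\<^sub>R B) \<longlongrightarrow> r *\<^sub>R g B) U" by simp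
    qed
    show "norm (g B) \<le> norm B * 1" for B
      using g_bound[of B] by simp
  qed
  then have "blinfun_apply (Blinfun g) = g" by (rule bounded_linear_Blinfun_apply)
  moreover from this have "norm (Blinfun g) \<le> 1"
    by (intro norm_blinfun_bound) (simp_all add: g_bound)
  ultimately show ?thesis using g by (intro that[of "Blinfun g"]) auto
qed

lemma norming_seq_support_functional:
  fixes T A :: "'a::real_normed_vector \<Rightarrow>\<^sub>L 'b::real_inner"
  assumes "T \<noteq> 0" and xs: "norming_seq T xs" and lim: "(\<lambda>n. A (xs n) \<bullet> T (xs n)) \<longlonglongrightarrow> l"
  obtains f :: "('a \<Rightarrow>\<^sub>L 'b) \<Rightarrow>\<^sub>L real" where "norm f = 1" "f T = norm T" "f A = l / norm T"
proof -
  have T0: "0 < norm T" using assms by simp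
  have unit: "\<And>n. norm (xs n) = 1" and normT: "(\<lambda>n. norm (T (xs n))) \<longlonglongrightarrow> norm T"
    using xs by (auto simp: norming_seq_def)
  obtain U where "U \<le> sequentially" and U: "ultrafilter U"
    using ex_ultrafilter_le[OF sequentially_bot] by blast
  then have along_U: "(s \<longlongrightarrow> c) U" if "s \<longlonglongrightarrow> c" for s and c :: real
    using that filterlim_mono by blast
  have U_bot: "U \<noteq> bot" using U by (simp add: ultrafilter_def)
  define s where "s B n = B (xs n) \<bullet> T (xs n) / norm T" for B :: "'a \<Rightarrow>\<^sub>L 'b" and n
  have s_add: "s (B + C) n = s B n + s C n" and s_scale: "s (r *\<^sub>R B) n = r * s B n" for B C r n
    by (simp_all add: s_def blinfun.add_left blinfun.scaleR_left inner_add_left add_divide_distrib)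
  have s_bound: "\<bar>s B n\<bar> \<le> norm B" for B n
    using inner_apply_le[of B "xs n" T "xs n"] unit T0
    by (simp add: s_def abs_divide pos_divide_le_eq)
  obtain f :: "('a \<Rightarrow>\<^sub>L 'b) \<Rightarrow>\<^sub>L real" where f: "\<And>B. (s B \<longlongrightarrow> f B) U" and "norm f \<le> 1"
    using ultrafilter_limit_functional[where s=s, OF U s_add s_scale s_bound] by blast
  have "(\<lambda>n. T (xs n) \<bullet> T (xs n)) \<longlonglongrightarrow> (norm T)\<^sup>2"
    using tendsto_power[OF normT, of 2] by (simp add: power2_norm_eq_inner)
  then have "s T \<longlonglongrightarrow> (norm T)\<^sup>2 / norm T"
    unfolding s_def by (rule tendsto_divide[OF _ tendsto_const]) (use T0 in simp)
  then have fT: "f T = norm T"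
    using tendsto_unique[OF U_bot f along_U] by (simp add: power2_eq_square)
  have "s A \<longlonglongrightarrow> l / norm T"
    unfolding s_def by (rule tendsto_divide[OF lim tendsto_const]) (use T0 in simp)
  then have fA: "f A = l / norm T"
    using tendsto_unique[OF U_bot f along_U] by simp
  have "norm T \<le> norm f * norm T"
    using norm_blinfun[of f T] fT by simp
  with \<open>norm f \<le> 1\<close> T0 have "norm f = 1" by simp
  then show ?thesis using fT fA by (rule that)
qed

lemma support_functional_derivative:
  fixes x B :: "'z::real_normed_vector" and f :: "'z \<Rightarrow>\<^sub>L real"
  assumes f: "norm f = 1" "f x = norm x" and "x \<noteq> 0"
    and upper: "\<And>t. (norm (x + t *\<^sub>R B))\<^sup>2 \<le> (norm x)\<^sup>2 + 2 * t * \<beta> + C * t\<^sup>2"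
  shows "f B * norm x = \<beta>"
proof -
  define \<delta> where "\<delta> = norm x / (\<bar>f B\<bar> + 1)"
  have "0 < \<delta>" using \<open>x \<noteq> 0\<close> by (simp add: \<delta>_def)
  have "t * (2 * (f B * norm x - \<beta>)) \<le> C * t\<^sup>2" if "\<bar>t\<bar> < \<delta>" for t
  proof -
    have "\<bar>t * f B\<bar> \<le> norm x"
      using that \<open>0 < \<delta>\<close> by (simp add: \<delta>_def abs_mult field_simps)
    then have "0 \<le> norm x + t * f B" by linarith
    moreover have "norm x + t * f B = f (x + t *\<^sub>R B)"
      using f by (simp add: blinfun.add_right blinfun.scaleR_right)
    moreover have "f (x + t *\<^sub>R B) \<le> norm (x + t *\<^sub>R B)"
      using norm_blinfun[of f "x + t *\<^sub>R B"] f by simp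
    ultimately have "(norm x + t * f B)\<^sup>2 \<le> (norm (x + t *\<^sub>R B))\<^sup>2"
      by (intro power_mono) auto
    have "t * (2 * (f B * norm x - \<beta>))
        = (norm x + t * f B)\<^sup>2 - (norm x)\<^sup>2 - (t * f B)\<^sup>2 - 2 * t * \<beta>"
      by (simp add: power2_eq_square algebra_simps)
    also have "\<dots> \<le> C * t\<^sup>2"
      using \<open>(norm x + t * f B)\<^sup>2 \<le> (norm (x + t *\<^sub>R B))\<^sup>2\<close> upper[of t] zero_le_power2[of "t * f B"]
      by linarith
    finally show ?thesis .
  qed
  then have "2 * (f B * norm x - \<beta>) = 0"
    by (rule linear_le_quadratic_imp_zero[OF \<open>0 < \<delta>\<close>])
  then show ?thesis by simp
qed

lemma birkhoff_orth_of_norming_seq: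
  fixes T A :: "'a::real_normed_vector \<Rightarrow>\<^sub>L 'b::real_inner"
  assumes xs: "norming_seq T xs" and lim: "(\<lambda>n. A (xs n) \<bullet> T (xs n)) \<longlonglongrightarrow> 0"
  shows "birkhoff_orth T A"
  unfolding birkhoff_orth_def
proof
  fix t :: real
  have unit: "\<And>n. norm (xs n) = 1" and normT: "(\<lambda>n. norm (T (xs n))) \<longlonglongrightarrow> norm T"
    using xs by (auto simp: norming_seq_def)
  have "(norm (T (xs n)))\<^sup>2 + 2 * t * (A (xs n) \<bullet> T (xs n)) \<le> (norm (T + t *\<^sub>R A))\<^sup>2" for n
  proof -
    have "(norm ((T + t *\<^sub>R A) (xs n)))\<^sup>2 \<le> (norm (T + t *\<^sub>R A))\<^sup>2"
      using norm_blinfun[of "T + t *\<^sub>R A" "xs n"] unit by (intro power_mono) auto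
    moreover have "0 \<le> t\<^sup>2 * (norm (A (xs n)))\<^sup>2" by simp
    ultimately show ?thesis unfolding norm_apply_add_scaleR_sq by linarith
  qed
  moreover have "(\<lambda>n. (norm (T (xs n)))\<^sup>2 + 2 * t * (A (xs n) \<bullet> T (xs n))) \<longlonglongrightarrow> (norm T)\<^sup>2 + 2 * t * 0"
    by (intro tendsto_intros normT lim)
  ultimately have "(norm T)\<^sup>2 \<le> (norm (T + t *\<^sub>R A))\<^sup>2"
    using LIMSEQ_le_const2 by fastforce
  then show "norm T \<le> norm (T + t *\<^sub>R A)" by (rule power2_le_imp_le) simp
qed

definition norming_seqs_disagree :: "('a::real_normed_vector \<Rightarrow>\<^sub>L 'b::real_inner) \<Rightarrow> bool" where
  "norming_seqs_disagree T \<longleftrightarrow> (\<exists>A xs ys c. norming_seq T xs \<and> norming_seq T ys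
     \<and> (\<lambda>n. blinfun_apply A (xs n) \<bullet> T (xs n)) \<longlonglongrightarrow> 0
     \<and> (\<lambda>n. blinfun_apply A (ys n) \<bullet> T (ys n)) \<longlonglongrightarrow> c \<and> c \<noteq> 0)"

definition norming_orth_criterion :: "('a::real_normed_vector \<Rightarrow>\<^sub>L 'b::real_inner) \<Rightarrow> bool" where
  "norming_orth_criterion T \<longleftrightarrow> (\<forall>A. birkhoff_orth T A \<longleftrightarrow>
     (\<forall>xs. norming_seq T xs \<longrightarrow> (\<forall>l. subseq_limit (\<lambda>n. A (xs n) \<bullet> T (xs n)) l \<longrightarrow> l = 0)))"

lemma norming_seqs_disagree_not_smooth:
  fixes T :: "'a::real_normed_vector \<Rightarrow>\<^sub>L 'b::real_inner"
  assumes "norming_seqs_disagree T"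
  shows "\<not> smooth_point T"
proof
  assume smooth: "smooth_point T"
  obtain A :: "'a \<Rightarrow>\<^sub>L 'b" and xs ys c where xs: "norming_seq T xs" "(\<lambda>n. A (xs n) \<bullet> T (xs n)) \<longlonglongrightarrow> 0"
    and ys: "norming_seq T ys" "(\<lambda>n. A (ys n) \<bullet> T (ys n)) \<longlonglongrightarrow> c" and "c \<noteq> 0"
    using assms by (auto simp: norming_seqs_disagree_def)
  have "T \<noteq> 0" using smooth by (simp add: smooth_point_def)
  obtain f :: "('a \<Rightarrow>\<^sub>L 'b) \<Rightarrow>\<^sub>L real" where "norm f = 1" "f T = norm T" "f A = 0"
    by (rule norming_seq_support_functional[OF \<open>T \<noteq> 0\<close> xs]) simp
  moreover obtain f' :: "('a \<Rightarrow>\<^sub>L 'b) \<Rightarrow>\<^sub>L real"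
    where "norm f' = 1" "f' T = norm T" "f' A = c / norm T"
    by (rule norming_seq_support_functional[OF \<open>T \<noteq> 0\<close> ys])
  ultimately have "f = f'" using smooth by (auto simp: smooth_point_def)
  with \<open>f A = 0\<close> \<open>f' A = c / norm T\<close> \<open>c \<noteq> 0\<close> \<open>T \<noteq> 0\<close> show False by simp
qed

lemma norming_seqs_disagree_not_criterion:
  fixes T :: "'a::real_normed_vector \<Rightarrow>\<^sub>L 'b::real_inner"
  assumes "norming_seqs_disagree T"
  shows "\<not> norming_orth_criterion T"
proof
  assume crit: "norming_orth_criterion T"
  obtain A :: "'a \<Rightarrow>\<^sub>L 'b" and xs ys c where xs: "norming_seq T xs" "(\<lambda>n. A (xs n) \<bullet> T (xs n)) \<longlonglongrightarrow> 0"
    and ys: "norming_seq T ys" "(\<lambda>n. A (ys n) \<bullet> T (ys n)) \<longlonglongrightarrow> c" and "c \<noteq> 0"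
    using assms by (auto simp: norming_seqs_disagree_def)
  have "birkhoff_orth T A" by (rule birkhoff_orth_of_norming_seq[OF xs])
  then have "c = 0"
    using crit ys subseq_limit_of_tendsto unfolding norming_orth_criterion_def by blast
  with \<open>c \<noteq> 0\<close> show False ..
qed

lemma norming_seqs_disagree_if_separated:
  fixes T :: "'a::real_normed_vector \<Rightarrow>\<^sub>L 'b::real_inner" and P :: "'a \<Rightarrow>\<^sub>L 'a"
  assumes "T \<noteq> 0" and xs: "norming_seq T xs" and ys: "norming_seq T ys"
    and "\<And>n. P (xs n) = 0" and "\<And>n. P (ys n) = ys n"
  shows "norming_seqs_disagree T"
proof -
  have "(\<lambda>n. (norm (T (ys n)))\<^sup>2) \<longlonglongrightarrow> (norm T)\<^sup>2"
    using xs ys by (intro tendsto_intros) (auto simp: norming_seq_def)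
  then have "(\<lambda>n. (T o\<^sub>L P) (ys n) \<bullet> T (ys n)) \<longlonglongrightarrow> (norm T)\<^sup>2"
    using assms by (simp add: power2_norm_eq_inner)
  moreover have "(\<lambda>n. (T o\<^sub>L P) (xs n) \<bullet> T (xs n)) \<longlonglongrightarrow> 0"
    using assms by simp
  ultimately show ?thesis
    unfolding norming_seqs_disagree_def using xs ys \<open>T \<noteq> 0\<close>
    by (intro exI[of _ "T o\<^sub>L P"] exI[of _ xs] exI[of _ ys] exI[of _ "(norm T)\<^sup>2"]) simp
qed

section \<open>The case of a strictly attained norm\<close>

locale strongly_norm_attaining =
  fixes T :: "'a::real_inner \<Rightarrow>\<^sub>L 'b::real_inner" and x0 :: 'a
  assumes norm_x0: "norm x0 = 1"
    and norm_attain_eq: "norm_attain T = {x0, - x0}"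
    and restr_norm_less: "restr_norm T {x. x \<bullet> x0 = 0} < norm T"
begin

definition gap :: real where
  "gap = (norm T)\<^sup>2 - (restr_norm T {x. x \<bullet> x0 = 0})\<^sup>2"

lemma norm_apply_x0: "norm (T x0) = norm T"
  using norm_attain_eq by (auto simp: norm_attain_def)

lemma inner_x0_x0: "x0 \<bullet> x0 = 1"
  using norm_x0 by (simp add: power2_norm_eq_inner[symmetric])

lemma inner_apply_x0_x0: "T x0 \<bullet> T x0 = (norm T)\<^sup>2"
  by (simp add: norm_apply_x0 flip: power2_norm_eq_inner)

lemma gap_pos: "0 < gap"
proof -
  have "0 \<le> restr_norm T {x. x \<bullet> x0 = 0}"
    by (rule restr_norm_nonneg[OF subspace_inner_zero])
  with restr_norm_less show ?thesis
    unfolding gap_def by (simp add: power_strict_mono)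
qed

lemma nonzero: "T \<noteq> 0"
  using gap_pos by (auto simp: gap_def)

lemma norm_apply_orth_le:
  assumes "y \<bullet> x0 = 0"
  shows "(norm (T y))\<^sup>2 \<le> ((norm T)\<^sup>2 - gap) * (norm y)\<^sup>2"
proof -
  have "norm (T y) \<le> restr_norm T {x. x \<bullet> x0 = 0} * norm y"
    using assms by (intro norm_apply_le_restr_norm[OF subspace_inner_zero]) simp
  then have "(norm (T y))\<^sup>2 \<le> (restr_norm T {x. x \<bullet> x0 = 0} * norm y)\<^sup>2"
    by (intro power_mono) auto
  then show ?thesis by (simp add: gap_def power_mult_distrib)
qed

(* x0 maximises ||T x||^2 on the unit sphere, so the first variation of ||T (x0 + s y)||^2
   vanishes in every direction y orthogonal to x0. *)
lemma inner_apply_orth: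
  assumes "y \<bullet> x0 = 0"
  shows "T x0 \<bullet> T y = 0"
proof -
  have "s * (2 * (T x0 \<bullet> T y)) \<le> defect T y * s\<^sup>2" for s
  proof -
    have "(norm (x0 + s *\<^sub>R y))\<^sup>2 = 1 + s\<^sup>2 * (norm y)\<^sup>2"
      using assms unfolding power2_norm_eq_inner
      by (simp add: inner_add_left inner_add_right inner_commute inner_x0_x0 power2_eq_square)
    moreover have "(norm (T (x0 + s *\<^sub>R y)))\<^sup>2
        = (norm T)\<^sup>2 + s * (2 * (T x0 \<bullet> T y)) + s\<^sup>2 * (norm (T y))\<^sup>2"
      unfolding power2_norm_eq_inner
      by (simp add: blinfun.add_right blinfun.scaleR_right inner_add_left inner_add_right
          inner_commute inner_apply_x0_x0 power2_eq_square algebra_simps)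
    ultimately show ?thesis
      using defect_nonneg[of T "x0 + s *\<^sub>R y"] by (simp add: defect_def algebra_simps)
  qed
  then have "2 * (T x0 \<bullet> T y) = 0"
    by (intro linear_le_quadratic_imp_zero[of 1]) auto
  then show ?thesis by simp
qed

lemma orth_decomposition:
  fixes x :: 'a
  defines "y \<equiv> x - (x \<bullet> x0) *\<^sub>R x0"
  shows "y \<bullet> x0 = 0"
    and "(norm x)\<^sup>2 = (x \<bullet> x0)\<^sup>2 + (norm y)\<^sup>2"
    and "(norm (T x))\<^sup>2 = (x \<bullet> x0)\<^sup>2 * (norm T)\<^sup>2 + (norm (T y))\<^sup>2"
proof -
  show y: "y \<bullet> x0 = 0" by (simp add: y_def inner_diff_left inner_x0_x0)
  then have y': "x0 \<bullet> y = 0" by (simp add: inner_commute)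
  have Ty: "T x0 \<bullet> T y = 0" "T y \<bullet> T x0 = 0"
    using inner_apply_orth[OF y] by (auto simp: inner_commute)
  have x: "x = (x \<bullet> x0) *\<^sub>R x0 + y" by (simp add: y_def)
  show "(norm x)\<^sup>2 = (x \<bullet> x0)\<^sup>2 + (norm y)\<^sup>2"
    unfolding power2_norm_eq_inner
    by (subst (1 2) x) (simp add: inner_add_left inner_add_right y y' inner_x0_x0 power2_eq_square)
  show "(norm (T x))\<^sup>2 = (x \<bullet> x0)\<^sup>2 * (norm T)\<^sup>2 + (norm (T y))\<^sup>2"
    unfolding power2_norm_eq_inner
    by (subst (1 2) x) (simp add: blinfun.add_right blinfun.scaleR_right inner_add_left
        inner_add_right Ty inner_apply_x0_x0 power2_eq_square)
qed

lemma unit_norm_apply_sq_le: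
  assumes "norm x = 1"
  shows "(norm (T x))\<^sup>2 \<le> (norm T)\<^sup>2 - gap * (norm (x - (x \<bullet> x0) *\<^sub>R x0))\<^sup>2"
proof -
  let ?y = "x - (x \<bullet> x0) *\<^sub>R x0"
  have \<alpha>: "(x \<bullet> x0)\<^sup>2 = 1 - (norm ?y)\<^sup>2"
    using orth_decomposition(2)[of x] assms by simp
  have "(norm (T x))\<^sup>2 = (1 - (norm ?y)\<^sup>2) * (norm T)\<^sup>2 + (norm (T ?y))\<^sup>2"
    using orth_decomposition(3)[of x] by (simp only: \<alpha>)
  then have "(norm (T x))\<^sup>2 = (norm T)\<^sup>2 - (norm T)\<^sup>2 * (norm ?y)\<^sup>2 + (norm (T ?y))\<^sup>2"
    by (simp add: algebra_simps)
  moreover have "(norm (T ?y))\<^sup>2 \<le> (norm T)\<^sup>2 * (norm ?y)\<^sup>2 - gap * (norm ?y)\<^sup>2"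
    using norm_apply_orth_le[OF orth_decomposition(1)[of x]] by (simp add: algebra_simps)
  ultimately show ?thesis by linarith
qed

lemma unit_inner_apply_approx:
  fixes A :: "'a \<Rightarrow>\<^sub>L 'b"
  assumes "norm x = 1"
  defines "\<alpha> \<equiv> x \<bullet> x0" and "y \<equiv> x - (x \<bullet> x0) *\<^sub>R x0"
  shows "\<bar>A x \<bullet> T x - \<alpha>\<^sup>2 * (A x0 \<bullet> T x0)\<bar> \<le> 3 * norm A * norm T * norm y"
proof -
  let ?K = "norm A * norm T * norm y"
  have "\<alpha>\<^sup>2 + (norm y)\<^sup>2 = 1"
    using orth_decomposition(2)[of x] assms by (simp add: \<alpha>_def y_def)
  then have "\<alpha>\<^sup>2 \<le> 1" and "(norm y)\<^sup>2 \<le> 1"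
    using zero_le_power2[of \<alpha>] zero_le_power2[of "norm y"] by linarith+
  then have \<alpha>: "\<bar>\<alpha>\<bar> \<le> 1" and y: "norm y \<le> 1"
    using abs_square_le_1[of "norm y"] by (simp_all add: abs_square_le_1)
  have x: "x = \<alpha> *\<^sub>R x0 + y" by (simp add: \<alpha>_def y_def)
  have "A x \<bullet> T x - \<alpha>\<^sup>2 * (A x0 \<bullet> T x0) = \<alpha> * (A x0 \<bullet> T y) + \<alpha> * (A y \<bullet> T x0) + A y \<bullet> T y"
    by (subst (1 2) x) (simp add: blinfun.add_right blinfun.scaleR_right inner_add_left
        inner_add_right power2_eq_square algebra_simps)
  moreover have "\<bar>\<alpha> * (A x0 \<bullet> T y)\<bar> \<le> ?K"
    using mult_mono[OF \<alpha> inner_apply_le[of A x0 T y]] norm_x0 by (simp add: abs_mult)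
  moreover have "\<bar>\<alpha> * (A y \<bullet> T x0)\<bar> \<le> ?K"
    using mult_mono[OF \<alpha> inner_apply_le[of A y T x0]] norm_x0 by (simp add: abs_mult)
  moreover have "\<bar>A y \<bullet> T y\<bar> \<le> ?K"
  proof -
    have "\<bar>A y \<bullet> T y\<bar> \<le> ?K * norm y"
      using inner_apply_le[of A y T y] by (simp add: mult.assoc)
    also have "\<dots> \<le> ?K" using y by (intro mult_left_le) auto
    finally show ?thesis .
  qed
  ultimately show ?thesis unfolding abs_le_iff by linarith
qed

lemma norming_seq_x0: "norming_seq T (\<lambda>n. x0)"
  using norm_attain_eq by (intro norming_seq_const) simp

lemma unit_apply_add_scaleR_sq_le:
  fixes A :: "'a \<Rightarrow>\<^sub>L 'b"
  assumes "norm x = 1"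
  defines "a \<equiv> A x0 \<bullet> T x0" and "L \<equiv> 3 * norm A * norm T + \<bar>A x0 \<bullet> T x0\<bar>"
  shows "(norm ((T + t *\<^sub>R A) x))\<^sup>2 \<le> (norm T)\<^sup>2 + 2 * t * a + (L\<^sup>2 / gap + (norm A)\<^sup>2) * t\<^sup>2"
proof -
  define \<alpha> where "\<alpha> = x \<bullet> x0"
  define s where "s = norm (x - \<alpha> *\<^sub>R x0)"
  define p where "p = A x \<bullet> T x"
  have \<alpha>: "\<alpha>\<^sup>2 = 1 - s\<^sup>2"
    using orth_decomposition(2)[of x] assms(1) by (simp add: \<alpha>_def s_def)
  have "0 \<le> s" by (simp add: s_def)
  moreover have "s\<^sup>2 \<le> 1" using \<alpha> zero_le_power2[of \<alpha>] by linarith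
  ultimately have "s \<le> 1" by (simp add: power_le_one_iff)
  have Tx: "(norm (T x))\<^sup>2 \<le> (norm T)\<^sup>2 - gap * s\<^sup>2"
    using unit_norm_apply_sq_le[OF assms(1)] by (simp add: \<alpha>_def s_def)
  have p: "\<bar>p - \<alpha>\<^sup>2 * a\<bar> \<le> 3 * norm A * norm T * s"
    using unit_inner_apply_approx[OF assms(1), of A] by (simp add: \<alpha>_def s_def p_def a_def)
  have "- (t * s\<^sup>2 * a) \<le> \<bar>t\<bar> * s * \<bar>a\<bar>"
  proof -
    have "- (t * s\<^sup>2 * a) \<le> \<bar>t * s\<^sup>2 * a\<bar>" by (rule abs_ge_minus_self)
    also have "\<dots> = \<bar>t\<bar> * \<bar>a\<bar> * s\<^sup>2" by (simp add: abs_mult mult_ac)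
    also have "\<dots> \<le> \<bar>t\<bar> * \<bar>a\<bar> * s"
      using \<open>0 \<le> s\<close> \<open>s \<le> 1\<close> by (intro mult_left_mono) (auto simp: power2_eq_square mult_left_le)
    finally show ?thesis by (simp add: mult_ac)
  qed
  moreover have "t * (p - \<alpha>\<^sup>2 * a) \<le> \<bar>t\<bar> * (3 * norm A * norm T * s)"
  proof -
    have "t * (p - \<alpha>\<^sup>2 * a) \<le> \<bar>t\<bar> * \<bar>p - \<alpha>\<^sup>2 * a\<bar>" by (metis abs_ge_self abs_mult)
    also have "\<dots> \<le> \<bar>t\<bar> * (3 * norm A * norm T * s)" using p by (intro mult_left_mono) auto
    finally show ?thesis .
  qed
  ultimately have "t * p \<le> t * a + \<bar>t\<bar> * s * L"
    unfolding L_def a_def[symmetric] \<alpha> by (simp add: algebra_simps)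
  moreover have "2 * (\<bar>t\<bar> * L) * s \<le> gap * s\<^sup>2 + (\<bar>t\<bar> * L)\<^sup>2 / gap"
    by (rule mult_le_square_div[OF gap_pos])
  moreover have "t\<^sup>2 * (norm (A x))\<^sup>2 \<le> t\<^sup>2 * (norm A)\<^sup>2"
    using norm_blinfun[of A x] assms(1) by (intro mult_left_mono power_mono) auto
  moreover have "(\<bar>t\<bar> * L)\<^sup>2 / gap = L\<^sup>2 / gap * t\<^sup>2"
    by (simp add: power_mult_distrib)
  ultimately show ?thesis
    using Tx unfolding norm_apply_add_scaleR_sq p_def by (simp add: algebra_simps)
qed

lemma norm_add_scaleR_sq_le:
  fixes A :: "'a \<Rightarrow>\<^sub>L 'b"
  obtains C where "\<And>t. (norm (T + t *\<^sub>R A))\<^sup>2 \<le> (norm T)\<^sup>2 + 2 * t * (A x0 \<bullet> T x0) + C * t\<^sup>2"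
proof
  fix t
  let ?C = "(3 * norm A * norm T + \<bar>A x0 \<bullet> T x0\<bar>)\<^sup>2 / gap + (norm A)\<^sup>2"
  let ?R = "(norm T)\<^sup>2 + 2 * t * (A x0 \<bullet> T x0) + ?C * t\<^sup>2"
  have unit: "(norm ((T + t *\<^sub>R A) u))\<^sup>2 \<le> ?R" if "norm u = 1" for u
    using unit_apply_add_scaleR_sq_le[OF that] by simp
  have "0 \<le> ?R" using unit[OF norm_x0] by (meson order_trans zero_le_power2)
  have "norm (T + t *\<^sub>R A) \<le> sqrt ?R"
    using unit \<open>0 \<le> ?R\<close> by (intro norm_blinfun_le_of_unit) (auto simp: real_le_rsqrt)
  then have "(norm (T + t *\<^sub>R A))\<^sup>2 \<le> (sqrt ?R)\<^sup>2" by (intro power_mono) auto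
  with \<open>0 \<le> ?R\<close> show "(norm (T + t *\<^sub>R A))\<^sup>2 \<le> ?R" by simp
qed

lemma inner_apply_tendsto:
  fixes A :: "'a \<Rightarrow>\<^sub>L 'b"
  assumes "norming_seq T xs"
  shows "(\<lambda>n. A (xs n) \<bullet> T (xs n)) \<longlonglongrightarrow> A x0 \<bullet> T x0"
proof -
  define s where "s n = norm (xs n - (xs n \<bullet> x0) *\<^sub>R x0)" for n
  have unit: "\<And>n. norm (xs n) = 1" and defect: "(\<lambda>n. defect T (xs n)) \<longlonglongrightarrow> 0"
    using assms by (auto simp: norming_seq_iff_defect)
  have "(s n)\<^sup>2 \<le> defect T (xs n) / gap" for n
    using unit_norm_apply_sq_le[OF unit[of n]] unit[of n] gap_pos
    by (simp add: s_def defect_def pos_le_divide_eq mult.commute)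
  then have "\<forall>n. (s n)\<^sup>2 \<le> defect T (xs n) / gap" by blast
  from real_tendsto_sandwich[OF always_eventually always_eventually[OF this]
      tendsto_const tendsto_divide_zero[OF defect]]
  have "(\<lambda>n. (s n)\<^sup>2) \<longlonglongrightarrow> 0" by simp
  moreover have "(\<lambda>n. sqrt ((s n)\<^sup>2)) = s" by (simp add: fun_eq_iff s_def)
  ultimately have s: "s \<longlonglongrightarrow> 0"
    using tendsto_real_sqrt[of "\<lambda>n. (s n)\<^sup>2" 0] by simp
  have \<alpha>: "(\<lambda>n. (xs n \<bullet> x0)\<^sup>2) \<longlonglongrightarrow> 1"
  proof -
    have "(xs n \<bullet> x0)\<^sup>2 = 1 - (s n)\<^sup>2" for n
      using orth_decomposition(2)[of "xs n"] unit[of n] by (simp add: s_def)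
    then show ?thesis
      using tendsto_diff[OF tendsto_const[of 1] tendsto_power[OF s, of 2]] by simp
  qed
  have "\<forall>n. norm (A (xs n) \<bullet> T (xs n) - (xs n \<bullet> x0)\<^sup>2 * (A x0 \<bullet> T x0))
      \<le> 3 * norm A * norm T * s n"
    using unit_inner_apply_approx[OF unit, of A] by (simp add: s_def)
  moreover have "(\<lambda>n. 3 * norm A * norm T * s n) \<longlonglongrightarrow> 0"
    using tendsto_mult[OF tendsto_const s, of "3 * norm A * norm T"] by simp
  ultimately have "(\<lambda>n. A (xs n) \<bullet> T (xs n) - (xs n \<bullet> x0)\<^sup>2 * (A x0 \<bullet> T x0)) \<longlonglongrightarrow> 0"
    by (rule Lim_null_comparison[OF always_eventually])
  from tendsto_add[OF this tendsto_mult[OF \<alpha> tendsto_const[of "A x0 \<bullet> T x0"]]]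
  show ?thesis by simp
qed

lemma smooth: "smooth_point T"
proof -
  have unique: "f = g"
    if "norm f = 1" "f T = norm T" "norm g = 1" "g T = norm T" for f g :: "('a \<Rightarrow>\<^sub>L 'b) \<Rightarrow>\<^sub>L real"
  proof (rule blinfun_eqI)
    fix B
    obtain C where C: "\<And>t. (norm (T + t *\<^sub>R B))\<^sup>2 \<le> (norm T)\<^sup>2 + 2 * t * (B x0 \<bullet> T x0) + C * t\<^sup>2"
      using norm_add_scaleR_sq_le by blast
    have "f B * norm T = g B * norm T"
      using support_functional_derivative[OF that(1,2) nonzero C]
        support_functional_derivative[OF that(3,4) nonzero C] by simp
    then show "f B = g B" using nonzero by simp
  qed
  obtain f :: "('a \<Rightarrow>\<^sub>L 'b) \<Rightarrow>\<^sub>L real" where "norm f = 1" "f T = norm T"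
    by (rule norming_seq_support_functional[OF nonzero norming_seq_x0 tendsto_const])
  with unique show ?thesis
    unfolding smooth_point_def using nonzero by blast
qed

lemma birkhoff_orth_iff: "birkhoff_orth T A \<longleftrightarrow> A x0 \<bullet> T x0 = 0"
proof
  assume orth: "birkhoff_orth T A"
  obtain C where C: "\<And>t. (norm (T + t *\<^sub>R A))\<^sup>2 \<le> (norm T)\<^sup>2 + 2 * t * (A x0 \<bullet> T x0) + C * t\<^sup>2"
    using norm_add_scaleR_sq_le by blast
  have "t * (- 2 * (A x0 \<bullet> T x0)) \<le> C * t\<^sup>2" for t
  proof -
    have "(norm T)\<^sup>2 \<le> (norm (T + t *\<^sub>R A))\<^sup>2"
      using orth by (intro power_mono) (auto simp: birkhoff_orth_def)
    with C[of t] have "(norm T)\<^sup>2 \<le> (norm T)\<^sup>2 + 2 * t * (A x0 \<bullet> T x0) + C * t\<^sup>2"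
      by linarith
    then show ?thesis by (simp add: algebra_simps)
  qed
  then have "- 2 * (A x0 \<bullet> T x0) = 0"
    by (intro linear_le_quadratic_imp_zero[of 1]) auto
  then show "A x0 \<bullet> T x0 = 0" by simp
next
  assume "A x0 \<bullet> T x0 = 0"
  then show "birkhoff_orth T A"
    by (intro birkhoff_orth_of_norming_seq[OF norming_seq_x0]) simp
qed

lemma criterion: "norming_orth_criterion T"
  unfolding norming_orth_criterion_def
proof (intro allI)
  fix A :: "'a \<Rightarrow>\<^sub>L 'b"
  have "(\<forall>xs. norming_seq T xs \<longrightarrow> (\<forall>l. subseq_limit (\<lambda>n. A (xs n) \<bullet> T (xs n)) l \<longrightarrow> l = 0))
      \<longleftrightarrow> A x0 \<bullet> T x0 = 0"
  proof
    assume "\<forall>xs. norming_seq T xs \<longrightarrow> (\<forall>l. subseq_limit (\<lambda>n. A (xs n) \<bullet> T (xs n)) l \<longrightarrow> l = 0)"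
    moreover have "subseq_limit (\<lambda>n. A ((\<lambda>n. x0) n) \<bullet> T ((\<lambda>n. x0) n)) (A x0 \<bullet> T x0)"
      by (simp add: subseq_limit_of_tendsto)
    ultimately show "A x0 \<bullet> T x0 = 0"
      using norming_seq_x0 by blast
  next
    assume a: "A x0 \<bullet> T x0 = 0"
    show "\<forall>xs. norming_seq T xs \<longrightarrow> (\<forall>l. subseq_limit (\<lambda>n. A (xs n) \<bullet> T (xs n)) l \<longrightarrow> l = 0)"
    proof (intro allI impI)
      fix xs l assume "norming_seq T xs" "subseq_limit (\<lambda>n. A (xs n) \<bullet> T (xs n)) l"
      from subseq_limit_unique[OF inner_apply_tendsto[OF this(1)] this(2)] a show "l = 0" by simp
    qed
  qed
  then show "birkhoff_orth T A \<longleftrightarrow>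
      (\<forall>xs. norming_seq T xs \<longrightarrow> (\<forall>l. subseq_limit (\<lambda>n. A (xs n) \<bullet> T (xs n)) l \<longrightarrow> l = 0))"
    by (simp add: birkhoff_orth_iff)
qed

end

section \<open>Orthonormal sequences\<close>

lemma summable_of_tails:
  fixes u :: "nat \<Rightarrow> 'a::{real_normed_vector,complete_space}"
  assumes "\<And>\<epsilon>. 0 < \<epsilon> \<Longrightarrow> \<exists>N. \<forall>m\<ge>N. \<forall>n>m. norm (\<Sum>k=m..<n. u k) < \<epsilon>"
  shows "summable u"
proof -
  have "dist (\<Sum>k<m. u k) (\<Sum>k<n. u k) = norm (\<Sum>k=m..<n. u k)" if "m < n" for m n
  proof -
    have "dist (\<Sum>k<m. u k) (\<Sum>k<n. u k) = norm ((\<Sum>k<n. u k) - (\<Sum>k<m. u k))"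
      by (metis dist_commute dist_norm)
    also have "\<dots> = norm (\<Sum>k=m..<n. u k)"
      using sum_diff_nat_ivl[of 0 m n u] that by (simp add: lessThan_atLeast0)
    finally show ?thesis .
  qed
  then have "Cauchy (\<lambda>n. \<Sum>k<n. u k)"
    unfolding Cauchy_altdef using assms by (metis le_less_trans less_imp_le_nat)
  then show ?thesis
    by (simp add: summable_iff_convergent Cauchy_convergent)
qed

definition orthonormal_seq :: "(nat \<Rightarrow> 'a::real_inner) \<Rightarrow> bool" where
  "orthonormal_seq e \<longleftrightarrow> (\<forall>k. norm (e k) = 1) \<and> (\<forall>i j. i \<noteq> j \<longrightarrow> e i \<bullet> e j = 0)"

definition orthonormal_proj :: "(nat \<Rightarrow> 'a::real_inner) \<Rightarrow> 'a \<Rightarrow> 'a" where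
  "orthonormal_proj e z = (\<Sum>k. (z \<bullet> e k) *\<^sub>R e k)"

lemma orthonormal_seq_inner:
  "orthonormal_seq e \<Longrightarrow> e i \<bullet> e j = (if i = j then 1 else 0)"
  by (auto simp: orthonormal_seq_def simp flip: power2_norm_eq_inner)

lemma inner_sum_orthonormal:
  assumes "orthonormal_seq e" and "finite I"
  shows "(\<Sum>k\<in>I. c k *\<^sub>R e k) \<bullet> e j = (if j \<in> I then c j else 0)"
proof -
  have "(\<Sum>k\<in>I. c k *\<^sub>R e k) \<bullet> e j = (\<Sum>k\<in>I. if k = j then c k else 0)"
    unfolding inner_sum_left by (rule sum.cong) (auto simp: orthonormal_seq_inner[OF assms(1)])
  also have "\<dots> = (if j \<in> I then c j else 0)" using assms(2) by simp
  finally show ?thesis .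
qed

lemma norm_sum_orthonormal_sq:
  assumes "orthonormal_seq e" and "finite I"
  shows "(norm (\<Sum>k\<in>I. c k *\<^sub>R e k))\<^sup>2 = (\<Sum>k\<in>I. (c k)\<^sup>2)"
  unfolding power2_norm_eq_inner inner_sum_right
  by (rule sum.cong) (simp_all add: inner_sum_orthonormal[OF assms] power2_eq_square)

lemma bessel_inequality:
  assumes "orthonormal_seq e" and "finite I"
  shows "(\<Sum>k\<in>I. (z \<bullet> e k)\<^sup>2) \<le> (norm z)\<^sup>2"
proof -
  define p where "p = (\<Sum>k\<in>I. (z \<bullet> e k) *\<^sub>R e k)"
  have "z \<bullet> p = (\<Sum>k\<in>I. (z \<bullet> e k)\<^sup>2)"
    by (simp add: p_def inner_sum_right power2_eq_square)
  moreover have "(norm p)\<^sup>2 = (\<Sum>k\<in>I. (z \<bullet> e k)\<^sup>2)"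
    unfolding p_def by (rule norm_sum_orthonormal_sq[OF assms])
  moreover have "0 \<le> (norm (z - p))\<^sup>2" by simp
  ultimately show ?thesis
    by (simp add: power2_norm_eq_inner inner_diff_left inner_diff_right inner_commute)
qed

context
  fixes e :: "nat \<Rightarrow> 'a::{real_inner,complete_space}"
  assumes e: "orthonormal_seq e"
begin

lemma orthonormal_expansion_sums: "(\<lambda>k. (z \<bullet> e k) *\<^sub>R e k) sums orthonormal_proj e z"
proof -
  have squares: "summable (\<lambda>k. (z \<bullet> e k)\<^sup>2)"
    using bessel_inequality[OF e] by (intro summableI_nonneg_bounded[where x="(norm z)\<^sup>2"]) auto
  have "summable (\<lambda>k. (z \<bullet> e k) *\<^sub>R e k)"
  proof (rule summable_of_tails)
    fix \<epsilon> :: real assume "0 < \<epsilon>"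
    then obtain N where N: "\<And>m n. m \<ge> N \<Longrightarrow> norm (\<Sum>k=m..<n. (z \<bullet> e k)\<^sup>2) < \<epsilon>\<^sup>2"
      using squares unfolding summable_Cauchy by (meson zero_less_power)
    show "\<exists>N. \<forall>m\<ge>N. \<forall>n>m. norm (\<Sum>k=m..<n. (z \<bullet> e k) *\<^sub>R e k) < \<epsilon>"
    proof (intro exI[of _ N] allI impI)
      fix m n assume "N \<le> m"
      have "(norm (\<Sum>k=m..<n. (z \<bullet> e k) *\<^sub>R e k))\<^sup>2 = (\<Sum>k=m..<n. (z \<bullet> e k)\<^sup>2)"
        by (rule norm_sum_orthonormal_sq[OF e]) simp
      also have "\<dots> < \<epsilon>\<^sup>2" using N[OF \<open>N \<le> m\<close>, of n] by simp
      finally show "norm (\<Sum>k=m..<n. (z \<bullet> e k) *\<^sub>R e k) < \<epsilon>"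
        by (rule power_less_imp_less_base) (use \<open>0 < \<epsilon>\<close> in simp)
    qed
  qed
  then show ?thesis by (simp add: orthonormal_proj_def summable_sums)
qed

lemma bounded_linear_orthonormal_proj: "bounded_linear (orthonormal_proj e)"
proof (rule bounded_linear_intro[where K=1])
  show "orthonormal_proj e (x + y) = orthonormal_proj e x + orthonormal_proj e y" for x y
    using sums_add[OF orthonormal_expansion_sums[of x] orthonormal_expansion_sums[of y]]
    by (intro sums_unique2[OF orthonormal_expansion_sums])
      (simp add: inner_add_left scaleR_add_left)
  show "orthonormal_proj e (r *\<^sub>R x) = r *\<^sub>R orthonormal_proj e x" for r x
    using sums_scaleR_right[OF orthonormal_expansion_sums[of x], of r]
    by (intro sums_unique2[OF orthonormal_expansion_sums]) simp
  show "norm (orthonormal_proj e z) \<le> norm z * 1" for z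
  proof -
    have "norm (\<Sum>k<n. (z \<bullet> e k) *\<^sub>R e k) \<le> norm z" for n
      using norm_sum_orthonormal_sq[OF e, of "{..<n}"] bessel_inequality[OF e, of "{..<n}" z]
      by (intro power2_le_imp_le[of "norm (\<Sum>k<n. (z \<bullet> e k) *\<^sub>R e k)" "norm z"]) auto
    moreover have "(\<lambda>n. norm (\<Sum>k<n. (z \<bullet> e k) *\<^sub>R e k)) \<longlonglongrightarrow> norm (orthonormal_proj e z)"
      using orthonormal_expansion_sums[of z] unfolding sums_def by (rule tendsto_norm)
    ultimately show ?thesis
      using LIMSEQ_le_const2[where a="norm z"] by simp
  qed
qed

lemma orthonormal_proj_basis: "orthonormal_proj e (e j) = e j"
proof -
  have "(\<lambda>k. (e j \<bullet> e k) *\<^sub>R e k) = (\<lambda>k. if k = j then e k else 0)"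
    using e by (auto simp: orthonormal_seq_inner)
  then show ?thesis
    using sums_single[of j e] by (intro sums_unique2[OF orthonormal_expansion_sums]) simp
qed

lemma orthonormal_proj_orth: "(\<And>k. w \<bullet> e k = 0) \<Longrightarrow> orthonormal_proj e w = 0"
  by (simp add: orthonormal_proj_def)

end

section \<open>The case of an unattained norm\<close>

lemma norming_seq_not_Cauchy:
  fixes T :: "'a::{real_normed_vector,complete_space} \<Rightarrow>\<^sub>L 'b::real_normed_vector"
  assumes "norm_attain T = {}" and xs: "norming_seq T xs"
  shows "\<not> Cauchy xs"
proof
  assume "Cauchy xs"
  then obtain z where z: "xs \<longlonglongrightarrow> z" by (auto simp: Cauchy_convergent_iff convergent_def)
  have "(\<lambda>n. norm (xs n)) = (\<lambda>n. 1)" using xs by (simp add: norming_seq_def)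
  with tendsto_norm[OF z] have "(\<lambda>n. 1) \<longlonglongrightarrow> norm z" by simp
  then have "norm z = 1" using LIMSEQ_unique[OF tendsto_const] by metis
  have "(\<lambda>n. norm (T (xs n))) \<longlonglongrightarrow> norm (T z)"
    by (intro tendsto_norm bounded_linear.tendsto[OF blinfun.bounded_linear_right z])
  then have "norm (T z) = norm T" using xs LIMSEQ_unique by (auto simp: norming_seq_def)
  with \<open>norm z = 1\<close> assms(1) show False by (auto simp: norm_attain_def)
qed

lemma convergent_inner_subseq:
  fixes x :: "nat \<Rightarrow> 'a::real_inner"
  assumes "finite F" and unit: "\<And>n. norm (x n) = 1"
  shows "\<exists>r. strict_mono r \<and> (\<forall>f\<in>F. convergent (\<lambda>n. x (r n) \<bullet> f))"
  using assms(1)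
proof (induction F rule: finite_induct)
  case empty
  show ?case using strict_mono_id by auto
next
  case (insert f F)
  then obtain r where r: "strict_mono r" and F: "\<forall>g\<in>F. convergent (\<lambda>n. x (r n) \<bullet> g)" by blast
  have "norm (x (r n) \<bullet> f) \<le> norm f" for n
    using Cauchy_Schwarz_ineq2[of "x (r n)" f] unit[of "r n"] by simp
  then have "bounded (range (\<lambda>n. x (r n) \<bullet> f))" by (auto simp: bounded_iff)
  then obtain l r' where r': "strict_mono r'" and "((\<lambda>n. x (r n) \<bullet> f) \<circ> r') \<longlonglongrightarrow> l"
    using bounded_imp_convergent_subsequence by blast
  then have "convergent (\<lambda>n. x ((r \<circ> r') n) \<bullet> f)" by (auto simp: convergent_def o_def)
  moreover have "convergent (\<lambda>n. x ((r \<circ> r') n) \<bullet> g)" if "g \<in> F" for g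
    using convergent_subseq_convergent[OF bspec[OF F that] r'] by (simp add: o_def)
  ultimately show ?case using strict_mono_o[OF r r'] by blast
qed

lemma inner_sum_orthonormal_set:
  fixes F :: "'a::real_inner set"
  assumes "finite F" "\<forall>g\<in>F. norm g = 1" "pairwise orthogonal F" and "f \<in> F"
  shows "(\<Sum>g\<in>F. c g *\<^sub>R g) \<bullet> f = c f"
proof -
  have "(\<Sum>g\<in>F. c g *\<^sub>R g) \<bullet> f = (\<Sum>g\<in>F. if g = f then c g else 0)"
    unfolding inner_sum_left
  proof (rule sum.cong)
    fix g assume "g \<in> F"
    then show "(c g *\<^sub>R g) \<bullet> f = (if g = f then c g else 0)"
      using assms by (auto simp: pairwise_def orthogonal_def simp flip: power2_norm_eq_inner)
  qed simp
  also have "\<dots> = c f" using assms by simp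
  finally show ?thesis .
qed

lemma norming_seq_orth_split:
  fixes T :: "'a::{real_inner,complete_space} \<Rightarrow>\<^sub>L 'b::real_inner"
  assumes "T \<noteq> 0" "norm_attain T = {}"
    and F: "finite F" "\<forall>f\<in>F. norm f = 1" "pairwise orthogonal F"
  obtains x p where "norming_seq T x" "\<not> Cauchy x" "Cauchy p" "\<And>n f. f \<in> F \<Longrightarrow> (x n - p n) \<bullet> f = 0"
proof -
  obtain xs where xs: "norming_seq T xs" using norming_seq_exists[OF assms(1)] by blast
  then have "\<And>n. norm (xs n) = 1" by (simp add: norming_seq_def)
  then obtain r where r: "strict_mono r" and conv: "\<forall>f\<in>F. convergent (\<lambda>n. xs (r n) \<bullet> f)"
    using convergent_inner_subseq[OF F(1)] by blast
  define x where "x = xs \<circ> r"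
  have x: "norming_seq T x" unfolding x_def by (rule norming_seq_subseq[OF xs r])
  define p where "p = (\<lambda>n. \<Sum>f\<in>F. (x n \<bullet> f) *\<^sub>R f)"
  have "(\<lambda>n. x n \<bullet> f) \<longlonglongrightarrow> lim (\<lambda>n. x n \<bullet> f)" if "f \<in> F" for f
    using conv that by (simp add: x_def o_def convergent_LIMSEQ_iff)
  then have "p \<longlonglongrightarrow> (\<Sum>f\<in>F. lim (\<lambda>n. x n \<bullet> f) *\<^sub>R f)"
    unfolding p_def by (intro tendsto_sum tendsto_scaleR tendsto_const)
  then have "Cauchy p" by (rule LIMSEQ_imp_Cauchy)
  moreover have "(x n - p n) \<bullet> f = 0" if "f \<in> F" for n f
    using inner_sum_orthonormal_set[OF F that] by (simp add: p_def inner_diff_left)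
  ultimately show ?thesis
    by (intro that[OF x norming_seq_not_Cauchy[OF assms(2) x]])
qed

(* The terms of x stay apart while the parts p along F converge, so differences of late terms
   of x - p are long, orthogonal to F and of small defect. *)
lemma far_orth_vectors_small_defect:
  fixes T :: "'a::{real_inner,complete_space} \<Rightarrow>\<^sub>L 'b::real_inner"
  assumes "T \<noteq> 0" "norm_attain T = {}"
    and F: "finite F" "\<forall>f\<in>F. norm f = 1" "pairwise orthogonal F"
  obtains \<delta> where "0 < \<delta>"
    and "\<And>\<eta>. 0 < \<eta> \<Longrightarrow> \<eta> \<le> 1 \<Longrightarrow> \<eta> \<le> \<delta> / 2 \<Longrightarrow>
          \<exists>d. (\<forall>f\<in>F. d \<bullet> f = 0) \<and> \<delta> / 2 \<le> norm d \<and> defect T d \<le> (8 + 2 * (norm T)\<^sup>2) * \<eta>"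
proof -
  obtain x p where x: "norming_seq T x" "\<not> Cauchy x" and "Cauchy p"
    and orth: "\<And>n f. f \<in> F \<Longrightarrow> (x n - p n) \<bullet> f = 0"
    using norming_seq_orth_split[OF assms] by blast
  have defect: "(\<lambda>n. defect T (x n)) \<longlonglongrightarrow> 0" using x(1) by (simp add: norming_seq_iff_defect)
  obtain \<delta> where "0 < \<delta>" and far: "\<And>M. \<exists>m\<ge>M. \<exists>n\<ge>M. \<delta> \<le> dist (x m) (x n)"
    using x(2) unfolding Cauchy_def by (meson not_less)
  show ?thesis
  proof (rule that[OF \<open>0 < \<delta>\<close>])
    fix \<eta> :: real assume \<eta>: "0 < \<eta>" "\<eta> \<le> 1" "\<eta> \<le> \<delta> / 2"
    obtain N1 where N1: "\<And>m n. m \<ge> N1 \<Longrightarrow> n \<ge> N1 \<Longrightarrow> dist (p m) (p n) < \<eta>"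
      using \<open>Cauchy p\<close> \<eta>(1) unfolding Cauchy_def by blast
    obtain N2 where N2: "\<And>n. n \<ge> N2 \<Longrightarrow> defect T (x n) < \<eta>"
      using order_tendstoD(2)[OF defect \<eta>(1)] by (auto simp: eventually_sequentially)
    obtain m n where mn: "m \<ge> max N1 N2" "n \<ge> max N1 N2" and "\<delta> \<le> dist (x m) (x n)"
      using far by blast
    define d where "d = (x m - p m) - (x n - p n)"
    have q: "norm (p m - p n) < \<eta>" using N1[of m n] mn by (simp add: dist_norm)
    have "norm (x m - x n) - norm (p m - p n) \<le> norm d"
      using norm_triangle_ineq2[of "x m - x n" "p m - p n"] by (simp add: d_def algebra_simps)
    then have "\<delta> / 2 \<le> norm d"
      using \<open>\<delta> \<le> dist (x m) (x n)\<close> q \<eta>(3) by (simp add: dist_norm)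
    moreover have "(norm (p m - p n))\<^sup>2 \<le> \<eta>"
      using q \<eta>(2) mult_left_le_one_le[of "norm (p m - p n)" "norm (p m - p n)"]
      by (simp add: power2_eq_square)
    then have "(norm T)\<^sup>2 * (norm (p m - p n))\<^sup>2 \<le> (norm T)\<^sup>2 * \<eta>" by (intro mult_left_mono) auto
    with defect_diff_le[of T "x m" "p m" "x n" "p n"] N2[of m] N2[of n] mn
    have "defect T d \<le> (8 + 2 * (norm T)\<^sup>2) * \<eta>" by (simp add: d_def algebra_simps)
    ultimately show "\<exists>d. (\<forall>f\<in>F. d \<bullet> f = 0) \<and> \<delta> / 2 \<le> norm d
        \<and> defect T d \<le> (8 + 2 * (norm T)\<^sup>2) * \<eta>"
      using orth by (intro exI[of _ d]) (auto simp: d_def inner_diff_left)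
  qed
qed

lemma exists_orth_unit_small_defect:
  fixes T :: "'a::{real_inner,complete_space} \<Rightarrow>\<^sub>L 'b::real_inner"
  assumes "T \<noteq> 0" "norm_attain T = {}"
    and F: "finite F" "\<forall>f\<in>F. norm f = 1" "pairwise orthogonal F" and "0 < \<epsilon>"
  shows "\<exists>e. norm e = 1 \<and> (\<forall>f\<in>F. e \<bullet> f = 0) \<and> defect T e < \<epsilon>"
proof -
  define K where "K = 8 + 2 * (norm T)\<^sup>2"
  have "0 < K" by (simp add: K_def add_pos_nonneg)
  obtain \<delta> where "0 < \<delta>" and far: "\<And>\<eta>. 0 < \<eta> \<Longrightarrow> \<eta> \<le> 1 \<Longrightarrow> \<eta> \<le> \<delta> / 2 \<Longrightarrow>
      \<exists>d. (\<forall>f\<in>F. d \<bullet> f = 0) \<and> \<delta> / 2 \<le> norm d \<and> defect T d \<le> K * \<eta>"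
    using far_orth_vectors_small_defect[OF assms(1,2) F] unfolding K_def by blast
  define \<eta> where "\<eta> = min (min 1 (\<delta> / 2)) (\<epsilon> * \<delta>\<^sup>2 / (8 * K))"
  have \<eta>: "0 < \<eta>" "\<eta> \<le> 1" "\<eta> \<le> \<delta> / 2"
    using \<open>0 < \<delta>\<close> \<open>0 < \<epsilon>\<close> \<open>0 < K\<close> by (auto simp: \<eta>_def)
  have "K * \<eta> \<le> K * (\<epsilon> * \<delta>\<^sup>2 / (8 * K))"
    using \<open>0 < K\<close> by (intro mult_left_mono) (auto simp: \<eta>_def)
  also have "\<dots> = \<epsilon> * \<delta>\<^sup>2 / 8" using \<open>0 < K\<close> by simp
  finally have "K * \<eta> \<le> \<epsilon> * \<delta>\<^sup>2 / 8" .
  obtain d where d: "\<forall>f\<in>F. d \<bullet> f = 0" "\<delta> / 2 \<le> norm d" "defect T d \<le> K * \<eta>"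
    using far[OF \<eta>(1-3)] by blast
  have "0 < norm d" using d(2) \<open>0 < \<delta>\<close> by linarith
  have "defect T (d /\<^sub>R norm d) = defect T d / (norm d)\<^sup>2"
    using \<open>0 < norm d\<close> by (simp add: defect_scaleR field_simps)
  also have "\<dots> \<le> (\<epsilon> * \<delta>\<^sup>2 / 8) / (\<delta> / 2)\<^sup>2"
    using d \<open>K * \<eta> \<le> \<epsilon> * \<delta>\<^sup>2 / 8\<close> \<open>0 < \<delta>\<close> \<open>0 < \<epsilon>\<close>
    by (intro frac_le power_mono) (auto intro: defect_nonneg)
  also have "\<dots> < \<epsilon>" using \<open>0 < \<delta>\<close> \<open>0 < \<epsilon>\<close> by (simp add: field_simps power2_eq_square)
  finally show ?thesis
    using d(1) \<open>0 < norm d\<close> by (intro exI[of _ "d /\<^sub>R norm d"]) auto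
qed

lemma orthonormal_seq_choice:
  assumes step: "\<And>F k. finite F \<Longrightarrow> \<forall>f\<in>F. norm f = 1 \<Longrightarrow> pairwise orthogonal F \<Longrightarrow>
      \<exists>e :: 'a::real_inner. norm e = 1 \<and> (\<forall>f\<in>F. e \<bullet> f = 0) \<and> P k e"
  obtains e where "orthonormal_seq e" "\<And>k. P k (e k)"
proof -
  define pick where "pick L k = (SOME e. norm e = 1 \<and> (\<forall>f\<in>set L. e \<bullet> f = 0) \<and> P k e)"
    for L :: "'a list" and k
  have pick: "norm (pick L k) = 1 \<and> (\<forall>f\<in>set L. pick L k \<bullet> f = 0) \<and> P k (pick L k)"
    if "\<forall>f\<in>set L. norm f = 1" "pairwise orthogonal (set L)" for L k
    unfolding pick_def by (rule someI_ex) (use step that in blast)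
  define L where "L = rec_nat [] (\<lambda>k L. L @ [pick L k])"
  define e where "e k = pick (L k) k" for k
  have L: "(\<forall>f\<in>set (L k). norm f = 1) \<and> pairwise orthogonal (set (L k))
      \<and> set (L k) = e ` {..<k}" for k
  proof (induction k)
    case (Suc k)
    then have IH: "\<forall>f\<in>set (L k). norm f = 1" "pairwise orthogonal (set (L k))"
      "set (L k) = e ` {..<k}"
      by auto
    have new: "norm (e k) = 1" "\<forall>f\<in>set (L k). e k \<bullet> f = 0"
      using pick[OF IH(1,2), of k] by (auto simp: e_def)
    have "pairwise orthogonal (insert (e k) (set (L k)))"
      by (rule pairwise_orthogonal_insert[OF IH(2)]) (use new in \<open>simp add: orthogonal_def\<close>)
    moreover have "set (L (Suc k)) = insert (e k) (set (L k))" by (simp add: L_def e_def)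
    ultimately show ?case using IH new by (auto simp: lessThan_Suc)
  qed (simp add: L_def)
  have e: "norm (e k) = 1 \<and> (\<forall>i<k. e k \<bullet> e i = 0) \<and> P k (e k)" for k
    using pick[of "L k" k] L[of k] by (auto simp: e_def)
  have "orthonormal_seq e"
    unfolding orthonormal_seq_def
  proof (intro conjI allI impI)
    show "norm (e k) = 1" for k using e by blast
    show "e i \<bullet> e j = 0" if "i \<noteq> j" for i j
    proof (cases "i < j")
      case True
      then show ?thesis using e[of j] inner_commute by metis
    next
      case False
      then show ?thesis using e[of i] that by simp
    qed
  qed
  with e show ?thesis by (intro that) auto
qed

lemma norming_seqs_disagree_if_not_attained:
  fixes T :: "'a::{real_inner,complete_space} \<Rightarrow>\<^sub>L 'b::real_inner"
  assumes "T \<noteq> 0" and "norm_attain T = {}"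
  shows "norming_seqs_disagree T"
proof -
  obtain e where e: "orthonormal_seq e" and small: "\<And>k. defect T (e k) < 1 / real (Suc k)"
    using exists_orth_unit_small_defect[OF assms]
      orthonormal_seq_choice[of "\<lambda>k e. defect T e < 1 / real (Suc k)"]
    by (metis of_nat_0_less_iff zero_less_Suc zero_less_divide_1_iff)
  have lower: "\<forall>k. 0 \<le> defect T (e k)" and upper: "\<forall>k. defect T (e k) \<le> 1 / real (Suc k)"
    using defect_nonneg small less_imp_le by blast+
  have "(\<lambda>k. 1 / real (Suc k)) \<longlonglongrightarrow> 0"
    using LIMSEQ_Suc[OF lim_const_over_n[of 1]] by simp
  from real_tendsto_sandwich[OF always_eventually[OF lower] always_eventually[OF upper]
      tendsto_const this]
  have "(\<lambda>k. defect T (e k)) \<longlonglongrightarrow> 0" .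
  then have norming: "norming_seq T e"
    using e by (simp add: norming_seq_iff_defect orthonormal_seq_def)
  define g where "g k = e (2 * k + 1)" for k
  have g: "orthonormal_seq g"
    using e by (auto simp: g_def orthonormal_seq_def)
  define P where "P = Blinfun (orthonormal_proj g)"
  have P: "P z = orthonormal_proj g z" for z
    by (simp add: P_def bounded_linear_Blinfun_apply[OF bounded_linear_orthonormal_proj[OF g]])
  show ?thesis
  proof (rule norming_seqs_disagree_if_separated[OF assms(1)])
    show "norming_seq T (e \<circ> (\<lambda>n. 2 * n))" "norming_seq T (e \<circ> (\<lambda>n. 2 * n + 1))"
      by (auto intro!: norming_seq_subseq[OF norming] simp: strict_mono_def)
    show "P ((e \<circ> (\<lambda>n. 2 * n)) n) = 0" for n
      unfolding P
    proof (rule orthonormal_proj_orth[OF g])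
      fix k
      have "2 * n \<noteq> 2 * k + 1" by presburger
      with e show "(e \<circ> (\<lambda>n. 2 * n)) n \<bullet> g k = 0" by (simp add: g_def orthonormal_seq_def)
    qed
    show "P ((e \<circ> (\<lambda>n. 2 * n + 1)) n) = (e \<circ> (\<lambda>n. 2 * n + 1)) n" for n
      using orthonormal_proj_basis[OF g, of n] by (simp add: P g_def)
  qed
qed

lemma norming_seqs_disagree_if_two_directions:
  fixes T :: "'a::real_inner \<Rightarrow>\<^sub>L 'b::real_inner"
  assumes "T \<noteq> 0" and x1: "x1 \<in> norm_attain T" and x2: "x2 \<in> norm_attain T"
    and "x2 \<noteq> x1" and "x2 \<noteq> - x1"
  shows "norming_seqs_disagree T"
proof -
  have "x1 \<bullet> x1 = 1" "x2 \<bullet> x2 = 1"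
    using x1 x2 by (auto simp: norm_attain_def simp flip: power2_norm_eq_inner)
  define \<beta> where "\<beta> = x1 \<bullet> x2"
  define w where "w = x1 - \<beta> *\<^sub>R x2"
  have "x2 \<bullet> w = 0" "x1 \<bullet> w = 1 - \<beta>\<^sup>2"
    using \<open>x1 \<bullet> x1 = 1\<close> \<open>x2 \<bullet> x2 = 1\<close>
    by (simp_all add: w_def \<beta>_def inner_diff_right inner_commute power2_eq_square)
  have "\<beta>\<^sup>2 \<noteq> 1"
  proof
    assume "\<beta>\<^sup>2 = 1"
    then have "w \<bullet> w = 0"
      using \<open>x2 \<bullet> w = 0\<close> \<open>x1 \<bullet> w = 1 - \<beta>\<^sup>2\<close> by (simp add: w_def inner_diff_left)
    then have "x1 = \<beta> *\<^sub>R x2" by (simp add: w_def)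
    moreover have "\<beta> = 1 \<or> \<beta> = - 1" using \<open>\<beta>\<^sup>2 = 1\<close> by (simp add: power2_eq_1_iff)
    ultimately show False using assms(4,5) by auto
  qed
  define P where "P = blinfun_scaleR_left x1 o\<^sub>L blinfun_inner_left (w /\<^sub>R (1 - \<beta>\<^sup>2))"
  show ?thesis
  proof (rule norming_seqs_disagree_if_separated[OF assms(1) norming_seq_const[OF x2]
        norming_seq_const[OF x1]])
    show "P x2 = 0" using \<open>x2 \<bullet> w = 0\<close> by (simp add: P_def)
    show "P x1 = x1" using \<open>x1 \<bullet> w = 1 - \<beta>\<^sup>2\<close> \<open>\<beta>\<^sup>2 \<noteq> 1\<close> by (simp add: P_def)
  qed
qed

lemma norming_seqs_disagree_if_restr_norm:
  fixes T :: "'a::real_inner \<Rightarrow>\<^sub>L 'b::real_inner"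
  assumes "T \<noteq> 0" and x0: "x0 \<in> norm_attain T"
    and "norm T \<le> restr_norm T {x. x \<bullet> x0 = 0}"
  shows "norming_seqs_disagree T"
proof -
  obtain xs where xs: "norming_seq T xs" and "\<And>n. xs n \<in> {x. x \<bullet> x0 = 0}"
    using norming_seq_in_subspace[OF assms(1) subspace_inner_zero assms(3)] by metis
  then have orth: "\<And>n. xs n \<bullet> x0 = 0" by simp
  have "x0 \<bullet> x0 = 1" using x0 by (auto simp: norm_attain_def simp flip: power2_norm_eq_inner)
  show ?thesis
    by (rule norming_seqs_disagree_if_separated[OF assms(1) xs norming_seq_const[OF x0],
          where P="blinfun_scaleR_left x0 o\<^sub>L blinfun_inner_left x0"])
      (simp_all add: orth \<open>x0 \<bullet> x0 = 1\<close>)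
qed

lemma norming_seqs_disagree_if_not_strongly_attaining:
  fixes T :: "'a::{real_inner,complete_space} \<Rightarrow>\<^sub>L 'b::real_inner"
  assumes "T \<noteq> 0" and not_strong: "\<nexists>x0. strongly_norm_attaining T x0"
  shows "norming_seqs_disagree T"
proof (cases "norm_attain T = {}")
  case True
  then show ?thesis by (rule norming_seqs_disagree_if_not_attained[OF assms(1)])
next
  case False
  then obtain x0 where x0: "x0 \<in> norm_attain T" by blast
  show ?thesis
  proof (cases "norm_attain T = {x0, - x0}")
    case True
    have "norm x0 = 1" using x0 by (simp add: norm_attain_def)
    with True not_strong have "norm T \<le> restr_norm T {x. x \<bullet> x0 = 0}"
      unfolding strongly_norm_attaining_def by auto
    then show ?thesis by (rule norming_seqs_disagree_if_restr_norm[OF assms(1) x0])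
  next
    case False
    have "- x0 \<in> norm_attain T" using x0 by (simp add: norm_attain_def blinfun.minus_right)
    with False x0 obtain x2 where "x2 \<in> norm_attain T" "x2 \<noteq> x0" "x2 \<noteq> - x0" by blast
    then show ?thesis by (intro norming_seqs_disagree_if_two_directions[OF assms(1) x0])
  qed
qed

theorem theorem3p2:
  fixes T :: "'a::{real_inner, complete_space} \<Rightarrow>\<^sub>L 'a"
  assumes "T \<noteq> 0"
  shows "(smooth_point T
            \<longleftrightarrow> (\<exists>x0. norm x0 = 1 \<and> norm_attain T = {x0, - x0}
                     \<and> restr_norm T {x. inner x x0 = 0} < norm T))
       \<and> (smooth_point T
            \<longleftrightarrow> (\<forall>A :: 'a \<Rightarrow>\<^sub>L 'a. birkhoff_orth T A \<longleftrightarrow>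
                   (\<forall>xs. norming_seq T xs \<longrightarrow>
                      (\<forall>l. subseq_limit (\<lambda>n. inner (blinfun_apply A (xs n)) (blinfun_apply T (xs n))) l
                             \<longrightarrow> l = 0))))"
proof -
  let ?ii = "\<exists>x0. strongly_norm_attaining T x0"
  have "smooth_point T \<longleftrightarrow> ?ii"
  proof
    show "?ii \<Longrightarrow> smooth_point T" using strongly_norm_attaining.smooth by blast
    show "smooth_point T \<Longrightarrow> ?ii"
      using norming_seqs_disagree_not_smooth
        norming_seqs_disagree_if_not_strongly_attaining[OF assms]
      by blast
  qed
  moreover have "norming_orth_criterion T \<longleftrightarrow> ?ii"
  proof
    show "?ii \<Longrightarrow> norming_orth_criterion T" using strongly_norm_attaining.criterion by blast
    show "norming_orth_criterion T \<Longrightarrow> ?ii"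
      using norming_seqs_disagree_not_criterion
        norming_seqs_disagree_if_not_strongly_attaining[OF assms]
      by blast
  qed
  ultimately show ?thesis
    unfolding strongly_norm_attaining_def norming_orth_criterion_def by simp
qed

end
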